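(* Let $X$ be a topological space, $x \in X$, and let $F$ be a strategy for player II in the game $\mathsf{G}_1(\Omega_x, \Omega_x)$. Then for every finite sequence $D_0, \dots, D_n$ of elements of $\Omega_x$ there is an open set $A$ with $x \in A$ such that for every $a \in A \setminus \{x\}$ there is $D_a \in \Omega_x$ with $F(D_0, \dots, D_n, D_a) = a$.
   Context: For a point $x$ of a space $X$, $\Omega_x$ denotes the collection of all sets $A \subset X$ such that $x \notin A$ and $x \in \overline{A}$. The game $\mathsf{G}_1(\Omega_x,\Omega_x)$ is played in innings $n \in \omega$: in inning $n$ player I chooses $A_n \in \Omega_x$ and then player II chooses $a_n \in A_n$; player II wins if $\{a_n : n \in \omega\} \in \Omega_x$. A strategy for player II is a function $F$ assigning to each finite nonempty sequence $(D_0,\dots,D_n)$ of elements of $\Omega_x$ a point $F(D_0,\dots,D_n) \in D_n$. *)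

theory Defs
  imports "HOL-Analysis.Analysis"
begin

definition Omega_pt :: "'a topology \<Rightarrow> 'a \<Rightarrow> 'a set set" where
  "Omega_pt X x = {A. A \<subseteq> topspace X \<and> x \<notin> A \<and> x \<in> X closure_of A}"

definition strategy_II :: "'a topology \<Rightarrow> 'a \<Rightarrow> ('a set list \<Rightarrow> 'a) \<Rightarrow> bool" where
  "strategy_II X x F \<longleftrightarrow>
     (\<forall>Ds. Ds \<noteq> [] \<and> set Ds \<subseteq> Omega_pt X x \<longrightarrow> F Ds \<in> last Ds)"

end

theory Submission
  imports Defs
begin

text \<open>Let B be the set of points of X, other than x, that F never answers after Ds.
  If x were in the closure of B, then B would be a legal move, and F's answer to it would
  be a point of B that F does answer. So some open neighbourhood of x misses B.\<close>

lemma strategy_II_response_mem: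
  assumes "strategy_II X x F" and "set Ds \<subseteq> Omega_pt X x" and "D \<in> Omega_pt X x"
  shows "F (Ds @ [D]) \<in> D"
proof -
  have "set (Ds @ [D]) \<subseteq> Omega_pt X x" using assms(2,3) by simp
  then have "F (Ds @ [D]) \<in> last (Ds @ [D])"
    using assms(1) unfolding strategy_II_def by blast
  then show ?thesis by simp
qed

definition unplayed_responses ::
    "'a topology \<Rightarrow> 'a \<Rightarrow> ('a set list \<Rightarrow> 'a) \<Rightarrow> 'a set list \<Rightarrow> 'a set"
  where "unplayed_responses X x F Ds =
    {a \<in> topspace X - {x}. \<forall>D \<in> Omega_pt X x. F (Ds @ [D]) \<noteq> a}"

lemma unplayed_responses_not_Omega_pt:
  assumes "strategy_II X x F" and "set Ds \<subseteq> Omega_pt X x"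
  shows "unplayed_responses X x F Ds \<notin> Omega_pt X x"
proof
  let ?B = "unplayed_responses X x F Ds"
  assume B: "?B \<in> Omega_pt X x"
  then have "F (Ds @ [?B]) \<in> ?B"
    by (rule strategy_II_response_mem[OF assms])
  then have "\<forall>D \<in> Omega_pt X x. F (Ds @ [D]) \<noteq> F (Ds @ [?B])"
    unfolding unplayed_responses_def by simp
  with B show False by blast
qed

lemma not_in_closure_of_unplayed_responses:
  assumes "strategy_II X x F" and "set Ds \<subseteq> Omega_pt X x"
  shows "x \<notin> X closure_of unplayed_responses X x F Ds"
  using unplayed_responses_not_Omega_pt[OF assms]
  unfolding Omega_pt_def unplayed_responses_def by simp

theorem lemma2p3:
  fixes X :: "'a topology" and x :: 'a and F :: "'a set list \<Rightarrow> 'a"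
  assumes "x \<in> topspace X"
    and "strategy_II X x F"
    and "Ds \<noteq> []" and "set Ds \<subseteq> Omega_pt X x"
  shows "\<exists>A. openin X A \<and> x \<in> A \<and>
           (\<forall>a \<in> A - {x}. \<exists>D \<in> Omega_pt X x. F (Ds @ [D]) = a)"
proof -
  let ?B = "unplayed_responses X x F Ds"
  obtain A where A: "openin X A" "x \<in> A" and disjoint: "A \<inter> ?B = {}"
    using not_in_closure_of_unplayed_responses[OF assms(2,4)] assms(1)
    unfolding in_closure_of by blast
  have "\<exists>D \<in> Omega_pt X x. F (Ds @ [D]) = a" if a: "a \<in> A - {x}" for a
  proof -
    have "a \<in> topspace X - {x}" using a openin_subset[OF A(1)] by blast
    moreover have "a \<notin> ?B" using a disjoint by blast
    ultimately show ?thesis unfolding unplayed_responses_def by blast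
  qed
  with A show ?thesis by blast
qed

end
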